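(* Let $1\leq e_1\leq\cdots\leq e_m$ be integers and let $b_i$ be integers with $0\leq b_i\leq e_i-1$ for $i=1,\ldots,m$. Then for every $k=1,\ldots,m$, $$\prod_{i=1}^m(e_i-b_i)\geq\Big(\sum_{i=1}^k(e_i-b_i)-(k-1)-\sum_{i=k+1}^m b_i\Big)e_{k+1}\cdots e_m,$$ where for $k=m$ the product $e_{k+1}\cdots e_m$ is $1$ and the sum $\sum_{i=k+1}^m b_i$ is $0$. *)

theory Defs
  imports Main
begin

end

theory Submission
  imports Defs
begin

text \<open>For \<open>j > k\<close> both sides are affine in
  \<open>b\<^sub>j \<in> [0, e\<^sub>j - 1]\<close>, so it suffices to treat the endpoints. At \<open>b\<^sub>j = 0\<close> the
  factor \<open>e\<^sub>j\<close> cancels; at \<open>b\<^sub>j = e\<^sub>j - 1\<close> it survives only on the right, together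
  with the subtracted excess \<open>e\<^sub>j - 1\<close>. Collecting such indices in a set \<open>D\<close>, the
  inequality is generalised so that induction over the tail goes through, and once the tail is
  exhausted one is left with the two-sided Bernoulli inequality
  \<open>\<Prod>(1 + y\<^sub>j) * (1 + \<Sum>x\<^sub>i - \<Sum>y\<^sub>j) \<le> \<Prod>(1 + x\<^sub>i)\<close> for \<open>0 \<le> x\<^sub>i \<le> y\<^sub>j\<close>.\<close>

lemma prod_one_plus_mult_one_minus_sum_le_1:
  fixes x :: "'i \<Rightarrow> 'a::linordered_idom"
  assumes "finite D" "\<forall>j\<in>D. 0 \<le> x j"
  shows "(\<Prod>j\<in>D. 1 + x j) * (1 - (\<Sum>j\<in>D. x j)) \<le> 1"
  using assms
proof (induction D rule: finite_induct)
  case empty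
  then show ?case by simp
next
  case (insert j D)
  define P where "P = (\<Prod>j\<in>D. 1 + x j)"
  define s where "s = (\<Sum>j\<in>D. x j)"
  have "0 \<le> P" unfolding P_def using insert.prems by (intro prod_nonneg) auto
  moreover have "0 \<le> x j * (s + x j)"
    using insert.prems by (simp add: s_def sum_nonneg)
  ultimately have "P * ((1 + x j) * (1 - s - x j)) \<le> P * (1 - s)"
    by (intro mult_left_mono) (simp_all add: algebra_simps)
  also have "\<dots> \<le> 1" using insert by (simp add: P_def s_def)
  finally show ?case using insert.hyps by (simp add: P_def s_def algebra_simps)
qed

lemma prod_one_plus_mult_sum_diff_le_prod:
  fixes x :: "'i \<Rightarrow> 'a::linordered_idom" and y :: "'j \<Rightarrow> 'a"
  assumes "finite A" "finite D" "\<forall>i\<in>A. 0 \<le> x i" "\<forall>j\<in>D. 0 \<le> y j"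
    and "\<forall>i\<in>A. \<forall>j\<in>D. x i \<le> y j"
  shows "(\<Prod>j\<in>D. 1 + y j) * (1 + (\<Sum>i\<in>A. x i) - (\<Sum>j\<in>D. y j)) \<le> (\<Prod>i\<in>A. 1 + x i)"
  using assms
proof (induction A arbitrary: D rule: finite_induct)
  case empty
  then show ?case using prod_one_plus_mult_one_minus_sum_le_1[of D y] by simp
next
  case (insert i A)
  define S where "S = (\<Sum>i\<in>A. x i)"
  have "0 \<le> S" unfolding S_def using insert.prems by (intro sum_nonneg) auto
  have xi: "0 \<le> x i" using insert.prems by simp
  show ?case
  proof (cases "(\<Sum>j\<in>D. y j) \<le> S")
    case True
    define X where "X = (\<Prod>j\<in>D. 1 + y j)"
    define t where "t = S - (\<Sum>j\<in>D. y j)"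
    have "0 \<le> X" unfolding X_def using insert.prems by (intro prod_nonneg) auto
    have "0 \<le> X * (x i * t)" using \<open>0 \<le> X\<close> xi True by (simp add: t_def)
    then have "X * (1 + t + x i) \<le> (1 + x i) * (X * (1 + t))"
      by (simp add: algebra_simps)
    also have "\<dots> \<le> (1 + x i) * (\<Prod>i\<in>A. 1 + x i)"
      using insert.IH[of D] insert.prems xi
      by (intro mult_left_mono) (simp_all add: X_def t_def S_def add_diff_eq)
    finally show ?thesis using insert.hyps by (simp add: X_def t_def S_def algebra_simps)
  next
    case False
    then obtain j where j: "j \<in> D" using \<open>0 \<le> S\<close> by fastforce
    define D' where "D' = D - {j}"
    define X where "X = (\<Prod>j\<in>D'. 1 + y j)"
    define z where "z = 1 + S - (\<Sum>j\<in>D. y j)"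
    have D: "D = insert j D'" "j \<notin> D'" "finite D'" using j insert.prems by (auto simp: D'_def)
    have "0 \<le> X" unfolding X_def D'_def using insert.prems by (intro prod_nonneg) auto
    have "0 \<le> X * ((y j - x i) * (1 - z))"
      using \<open>0 \<le> X\<close> False j insert.prems by (simp add: z_def)
    then have "(1 + y j) * X * (z + x i) \<le> (1 + x i) * (X * (z + y j))"
      by (simp add: algebra_simps)
    also have "\<dots> \<le> (1 + x i) * (\<Prod>i\<in>A. 1 + x i)"
      using insert.IH[of D'] insert.prems xi D
      by (intro mult_left_mono) (auto simp: X_def z_def S_def algebra_simps)
    finally show ?thesis using insert.hyps D by (simp add: X_def z_def S_def algebra_simps)
  qed
qed

text \<open>Both sides are affine in \<open>b\<close>, so the bounds at the endpoints \<open>b = 0\<close> and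
  \<open>b = e - 1\<close> give it on the whole interval.\<close>

lemma mult_diff_bound_of_endpoint_bounds:
  fixes L Y W e b :: "'a::linordered_idom"
  assumes "Y * W \<le> L" "e * Y * (W - (e - 1)) \<le> L" "0 \<le> b" "b \<le> e - 1"
  shows "e * Y * (W - b) \<le> (e - b) * L"
proof (cases "b = 0")
  case True
  then show ?thesis using assms by (simp add: mult_left_mono mult.assoc)
next
  case False
  have "(e - 1) * ((e - b) * L - e * Y * (W - b))
      = (e - 1 - b) * e * (L - Y * W) + b * (L - e * Y * (W - (e - 1)))"
    by (simp add: algebra_simps)
  also have "0 \<le> \<dots>" using assms by simp
  finally show ?thesis using False assms(3,4) by (simp add: zero_le_mult_iff)
qed

lemma prod_mult_sum_bound_le_prod_diff:
  fixes a e b :: "'i \<Rightarrow> 'a::linordered_idom"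
  assumes "finite A" "finite D" "finite P" "D \<inter> P = {}"
    and "\<forall>i\<in>A. 1 \<le> a i" "\<forall>j\<in>D. 1 \<le> e j" "\<forall>j\<in>P. 0 \<le> b j \<and> b j \<le> e j - 1"
    and "\<forall>i\<in>A. \<forall>j\<in>D \<union> P. a i \<le> e j"
  shows "(\<Prod>j\<in>D \<union> P. e j) * (1 + (\<Sum>i\<in>A. a i - 1) - (\<Sum>j\<in>D. e j - 1) - (\<Sum>j\<in>P. b j))
    \<le> (\<Prod>i\<in>A. a i) * (\<Prod>j\<in>P. e j - b j)"
  using assms(3,1,2,4-)
proof (induction P arbitrary: D rule: finite_induct)
  case empty
  then show ?case
    using prod_one_plus_mult_sum_diff_le_prod[of A D "\<lambda>i. a i - 1" "\<lambda>j. e j - 1"] by simp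
next
  case (insert j P)
  define L where "L = (\<Prod>i\<in>A. a i) * (\<Prod>j\<in>P. e j - b j)"
  define Y where "Y = (\<Prod>j\<in>D \<union> P. e j)"
  define W where "W = 1 + (\<Sum>i\<in>A. a i - 1) - (\<Sum>j\<in>D. e j - 1) - (\<Sum>j\<in>P. b j)"
  have j: "j \<notin> D \<union> P" "0 \<le> b j" "b j \<le> e j - 1"
    using insert.hyps(2) insert.prems(3,6) by auto
  have "Y * W \<le> L"
    unfolding L_def Y_def W_def using insert.prems by (intro insert.IH) auto
  moreover have "e j * Y * (W - (e j - 1)) \<le> L"
  proof -
    have prod_eq: "(\<Prod>j\<in>insert j D \<union> P. e j) = e j * Y"
      using j insert.prems(2) insert.hyps(1) by (simp add: Y_def)
    have sum_eq: "(\<Sum>j\<in>insert j D. e j - 1) = (e j - 1) + (\<Sum>j\<in>D. e j - 1)"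
      using j insert.prems(2) by simp
    have "(\<Prod>j\<in>insert j D \<union> P. e j) *
        (1 + (\<Sum>i\<in>A. a i - 1) - (\<Sum>j\<in>insert j D. e j - 1) - (\<Sum>j\<in>P. b j)) \<le> L"
      unfolding L_def using j insert.prems insert.hyps
      by (intro insert.IH) auto
    then show ?thesis unfolding prod_eq sum_eq by (simp add: W_def algebra_simps)
  qed
  ultimately have "e j * Y * (W - b j) \<le> (e j - b j) * L"
    using j by (intro mult_diff_bound_of_endpoint_bounds)
  moreover have "(\<Prod>j\<in>D \<union> insert j P. e j) = e j * Y"
    using j insert.prems(2) insert.hyps(1) by (simp add: Y_def)
  moreover have "(\<Sum>j\<in>insert j P. b j) = (\<Sum>j\<in>P. b j) + b j"
    using insert.hyps by simp
  moreover have "(\<Prod>i\<in>A. a i) * (\<Prod>j\<in>insert j P. e j - b j) = (e j - b j) * L"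
    using insert.hyps by (simp add: L_def)
  ultimately show ?case by (simp add: W_def diff_diff_eq add.assoc)
qed

theorem lemma5p5:
  fixes e b :: "nat \<Rightarrow> int" and m k :: nat
  assumes e_pos: "\<forall>i\<in>{1..m}. 1 \<le> e i"
    and e_mono: "\<forall>i\<in>{1..m}. \<forall>j\<in>{1..m}. i \<le> j \<longrightarrow> e i \<le> e j"
    and b_bounds: "\<forall>i\<in>{1..m}. 0 \<le> b i \<and> b i \<le> e i - 1"
    and k: "1 \<le> k" "k \<le> m"
  shows "(\<Prod>i=1..m. e i - b i) \<ge>
    ((\<Sum>i=1..k. e i - b i) - (int k - 1) - (\<Sum>i=k+1..m. b i)) * (\<Prod>i=k+1..m. e i)"
proof -
  have b: "0 \<le> b i" "b i \<le> e i - 1" if "i \<in> {1..m}" for i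
    using b_bounds that by auto
  have head: "1 \<le> e i - b i" if "i \<in> {1..k}" for i
    using b[of i] that k by simp
  have head_le_tail: "e i - b i \<le> e j" if "i \<in> {1..k}" "j \<in> {k+1..m}" for i j
    using e_mono[rule_format, of i j] b[of i] that k by simp
  have "(\<Prod>j\<in>{} \<union> {k+1..m}. e j) *
      (1 + (\<Sum>i=1..k. e i - b i - 1) - (\<Sum>j\<in>{}. e j - 1) - (\<Sum>j=k+1..m. b j))
    \<le> (\<Prod>i=1..k. e i - b i) * (\<Prod>j=k+1..m. e j - b j)"
    using b head head_le_tail by (intro prod_mult_sum_bound_le_prod_diff) auto
  moreover have "1 + (\<Sum>i=1..k. e i - b i - 1) - (\<Sum>j\<in>{}. e j - 1) - (\<Sum>j=k+1..m. b j)
      = (\<Sum>i=1..k. e i - b i) - (int k - 1) - (\<Sum>i=k+1..m. b i)"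
    by (simp add: sum_subtractf)
  moreover have "{1..m} = {1..k} \<union> {k+1..m}" using k by auto
  then have "(\<Prod>i=1..m. e i - b i) = (\<Prod>i=1..k. e i - b i) * (\<Prod>i=k+1..m. e i - b i)"
    by (simp add: prod.union_disjoint)
  ultimately show ?thesis by (simp only: Un_empty_left mult.commute)
qed

end
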